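(* Claimwise stability does not imply ex-post stability or fractional stability: there exist a set $N$ of $n$ agents and a set $O$ of $n$ objects with strict preferences $\succ_i$ over $O$ ($i\in N$) and strict priorities $\succ_o$ over $N$ ($o\in O$), and a random matching $p$, such that $p$ is claimwise stable but neither ex-post stable nor fractionally stable.
   Context: A random matching is an $n\times n$ bistochastic matrix $p=[p(i,o)]_{i\in N,o\in O}$ (nonnegative entries, every row and every column summing to $1$); it is deterministic if all entries lie in $\{0,1\}$. A deterministic matching $p$ is stable if there exist no $i,j\in N$, $o,o'\in O$ with $p(i,o')=1$, $p(j,o)=1$, $o\succ_i o'$, $i\succ_o j$. A random matching is ex-post stable if it can be written as $\sum_{j=1}^k\lambda_jP_j$ with each $P_j$ a stable deterministic matching, $\lambda_j\in(0,1]$, $\sum_j\lambda_j=1$. It is fractionally stable if for every $(i,o)\in N\times O$, $\sum_{o':o'\succ_i o}p(i,o')\ge\sum_{j:i\succ_o j}p(j,o)$. It is claimwise stable if for every $(i,o)\in N\times O$ and every $j\in N$ with $i\succ_o j$, $\sum_{o':o'\succ_i o}p(i,o')\ge p(j,o)$. *)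

theory Defs
  imports Complex_Main
begin

definition strict_order_on :: "'a set \<Rightarrow> ('a \<Rightarrow> 'a \<Rightarrow> bool) \<Rightarrow> bool" where
  "strict_order_on A R \<longleftrightarrow>
     (\<forall>x\<in>A. \<not> R x x) \<and>
     (\<forall>x\<in>A. \<forall>y\<in>A. \<forall>z\<in>A. R x y \<longrightarrow> R y z \<longrightarrow> R x z) \<and>
     (\<forall>x\<in>A. \<forall>y\<in>A. x \<noteq> y \<longrightarrow> R x y \<or> R y x)"

text \<open>pref i b b' : b \<succ>_i b' ;  prio b i j : i \<succ>_b j.\<close>
definition market :: "'n set \<Rightarrow> 'b set \<Rightarrow> ('n \<Rightarrow> 'b \<Rightarrow> 'b \<Rightarrow> bool) \<Rightarrow> ('b \<Rightarrow> 'n \<Rightarrow> 'n \<Rightarrow> bool) \<Rightarrow> bool" where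
  "market N Obj pref prio \<longleftrightarrow> finite N \<and> finite Obj \<and> card N = card Obj \<and>
     (\<forall>i\<in>N. strict_order_on Obj (pref i)) \<and> (\<forall>b\<in>Obj. strict_order_on N (prio b))"

definition random_matching :: "'n set \<Rightarrow> 'b set \<Rightarrow> ('n \<Rightarrow> 'b \<Rightarrow> real) \<Rightarrow> bool" where
  "random_matching N Obj p \<longleftrightarrow>
     (\<forall>i\<in>N. \<forall>b\<in>Obj. p i b \<ge> 0) \<and>
     (\<forall>i\<in>N. (\<Sum>b\<in>Obj. p i b) = 1) \<and>
     (\<forall>b\<in>Obj. (\<Sum>i\<in>N. p i b) = 1)"

definition deterministic :: "'n set \<Rightarrow> 'b set \<Rightarrow> ('n \<Rightarrow> 'b \<Rightarrow> real) \<Rightarrow> bool" where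
  "deterministic N Obj p \<longleftrightarrow> random_matching N Obj p \<and> (\<forall>i\<in>N. \<forall>b\<in>Obj. p i b = 0 \<or> p i b = 1)"

definition stable_det :: "'n set \<Rightarrow> 'b set \<Rightarrow> ('n \<Rightarrow> 'b \<Rightarrow> 'b \<Rightarrow> bool) \<Rightarrow> ('b \<Rightarrow> 'n \<Rightarrow> 'n \<Rightarrow> bool)
     \<Rightarrow> ('n \<Rightarrow> 'b \<Rightarrow> real) \<Rightarrow> bool" where
  "stable_det N Obj pref prio P \<longleftrightarrow> deterministic N Obj P \<and>
     \<not> (\<exists>i\<in>N. \<exists>j\<in>N. \<exists>b\<in>Obj. \<exists>b'\<in>Obj. P i b' = 1 \<and> P j b = 1 \<and> pref i b b' \<and> prio b i j)"

definition ex_post_stable :: "'n set \<Rightarrow> 'b set \<Rightarrow> ('n \<Rightarrow> 'b \<Rightarrow> 'b \<Rightarrow> bool) \<Rightarrow> ('b \<Rightarrow> 'n \<Rightarrow> 'n \<Rightarrow> bool)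
     \<Rightarrow> ('n \<Rightarrow> 'b \<Rightarrow> real) \<Rightarrow> bool" where
  "ex_post_stable N Obj pref prio p \<longleftrightarrow>
     (\<exists>(k::nat) (lam::nat \<Rightarrow> real) (Ps::nat \<Rightarrow> 'n \<Rightarrow> 'b \<Rightarrow> real).
        k \<ge> 1 \<and>
        (\<forall>j\<in>{1..k}. stable_det N Obj pref prio (Ps j) \<and> 0 < lam j \<and> lam j \<le> 1) \<and>
        (\<Sum>j=1..k. lam j) = 1 \<and>
        (\<forall>i\<in>N. \<forall>b\<in>Obj. p i b = (\<Sum>j=1..k. lam j * Ps j i b)))"

definition fractionally_stable :: "'n set \<Rightarrow> 'b set \<Rightarrow> ('n \<Rightarrow> 'b \<Rightarrow> 'b \<Rightarrow> bool) \<Rightarrow> ('b \<Rightarrow> 'n \<Rightarrow> 'n \<Rightarrow> bool)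
     \<Rightarrow> ('n \<Rightarrow> 'b \<Rightarrow> real) \<Rightarrow> bool" where
  "fractionally_stable N Obj pref prio p \<longleftrightarrow>
     (\<forall>i\<in>N. \<forall>b\<in>Obj. (\<Sum>b'\<in>{b'\<in>Obj. pref i b' b}. p i b') \<ge> (\<Sum>j\<in>{j\<in>N. prio b i j}. p j b))"

definition claimwise_stable :: "'n set \<Rightarrow> 'b set \<Rightarrow> ('n \<Rightarrow> 'b \<Rightarrow> 'b \<Rightarrow> bool) \<Rightarrow> ('b \<Rightarrow> 'n \<Rightarrow> 'n \<Rightarrow> bool)
     \<Rightarrow> ('n \<Rightarrow> 'b \<Rightarrow> real) \<Rightarrow> bool" where
  "claimwise_stable N Obj pref prio p \<longleftrightarrow>
     (\<forall>i\<in>N. \<forall>b\<in>Obj. \<forall>j\<in>N. prio b i j \<longrightarrow> (\<Sum>b'\<in>{b'\<in>Obj. pref i b' b}. p i b') \<ge> p j b)"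

end

theory Submission
  imports Defs
begin

text \<open>In a stable deterministic matching, if some agent j that i outranks at b holds b, then i
  holds an object it prefers to b (otherwise i and b would block); so the fractional stability
  inequality at (i, b) reads 1 \<le> 1 or 0 \<le> something. Fractional stability is a family of linear
  inequalities and therefore survives convex combinations, so every ex-post stable matching is
  fractionally stable. It remains to give a claimwise stable random matching violating one of
  these inequalities.\<close>

lemma deterministic_obtain_object:
  assumes "deterministic N Obj P" and "i \<in> N"
  obtains b where "b \<in> Obj" and "P i b = 1"
proof -
  have zero_one: "\<forall>b\<in>Obj. P i b = 0 \<or> P i b = 1" and row: "(\<Sum>b\<in>Obj. P i b) = 1"
    using assms by (auto simp: deterministic_def random_matching_def)
  have "\<exists>b\<in>Obj. P i b = 1"
  proof (rule ccontr)
    assume "\<not> ?thesis"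
    then have "(\<Sum>b\<in>Obj. P i b) = 0" by (intro sum.neutral) (use zero_one in blast)
    with row show False by simp
  qed
  with that show thesis by blast
qed

lemma deterministic_column_sum_le_1:
  assumes "deterministic N Obj P" and "finite N" and "b \<in> Obj" and "A \<subseteq> N"
  shows "(\<Sum>j\<in>A. P j b) \<le> 1"
proof -
  have "(\<Sum>j\<in>A. P j b) \<le> (\<Sum>j\<in>N. P j b)"
    using assms by (intro sum_mono2) (auto simp: deterministic_def random_matching_def)
  also have "\<dots> = 1" using assms by (simp add: deterministic_def random_matching_def)
  finally show ?thesis .
qed

lemma deterministic_column_unique:
  assumes "deterministic N Obj P" and "finite N" and "b \<in> Obj"
    and "i \<in> N" and "j \<in> N" and "i \<noteq> j" and "P j b = 1"
  shows "P i b \<noteq> 1"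
proof
  assume "P i b = 1"
  moreover have "(\<Sum>x\<in>{i, j}. P x b) \<le> 1"
    using assms by (intro deterministic_column_sum_le_1) auto
  ultimately show False using assms by simp
qed

lemma stable_det_imp_fractionally_stable:
  assumes market: "market N Obj pref prio" and stable: "stable_det N Obj pref prio P"
  shows "fractionally_stable N Obj pref prio P"
  unfolding fractionally_stable_def
proof (intro ballI)
  fix i b assume i: "i \<in> N" and b: "b \<in> Obj"
  have det: "deterministic N Obj P"
    and no_block: "\<not> (\<exists>i\<in>N. \<exists>j\<in>N. \<exists>b\<in>Obj. \<exists>b'\<in>Obj. P i b' = 1 \<and> P j b = 1 \<and> pref i b b' \<and> prio b i j)"
    using stable by (simp_all add: stable_det_def)
  have fin: "finite N" "finite Obj" and pref_order: "strict_order_on Obj (pref i)"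
    and prio_order: "strict_order_on N (prio b)"
    using market i b by (simp_all add: market_def)
  have nonneg: "\<And>x y. x \<in> N \<Longrightarrow> y \<in> Obj \<Longrightarrow> 0 \<le> P x y"
    using det by (simp add: deterministic_def random_matching_def)
  show "(\<Sum>j\<in>{j\<in>N. prio b i j}. P j b) \<le> (\<Sum>b'\<in>{b'\<in>Obj. pref i b' b}. P i b')"
  proof (cases "\<exists>j\<in>N. prio b i j \<and> P j b = 1")
    case False
    with det b have "(\<Sum>j\<in>{j\<in>N. prio b i j}. P j b) = 0"
      by (intro sum.neutral) (auto simp: deterministic_def)
    moreover have "0 \<le> (\<Sum>b'\<in>{b'\<in>Obj. pref i b' b}. P i b')"
      using nonneg i by (intro sum_nonneg) auto
    ultimately show ?thesis by simp
  next
    case True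
    then obtain j where j: "j \<in> N" "prio b i j" "P j b = 1" by blast
    have "i \<noteq> j" using prio_order j i unfolding strict_order_on_def by blast
    obtain b' where b': "b' \<in> Obj" "P i b' = 1"
      using deterministic_obtain_object[OF det i] .
    have "b' \<noteq> b"
      using deterministic_column_unique[OF det fin(1) b i j(1) \<open>i \<noteq> j\<close> j(3)] b' by auto
    moreover have "\<not> pref i b b'" using no_block i j b b' by blast
    ultimately have "pref i b' b"
      using pref_order b b' unfolding strict_order_on_def by blast
    have "(\<Sum>j\<in>{j\<in>N. prio b i j}. P j b) \<le> 1"
      using det fin(1) b by (rule deterministic_column_sum_le_1) auto
    also have "1 = P i b'" using b' by simp
    also have "\<dots> \<le> (\<Sum>b'\<in>{b'\<in>Obj. pref i b' b}. P i b')"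
      using nonneg i b' \<open>pref i b' b\<close> fin(2) by (intro member_le_sum) auto
    finally show ?thesis .
  qed
qed

lemma fractionally_stable_convex_combination:
  assumes stable: "\<And>t. t \<in> T \<Longrightarrow> fractionally_stable N Obj pref prio (Ps t)"
    and nonneg: "\<And>t. t \<in> T \<Longrightarrow> 0 \<le> lam t"
    and p: "\<And>i b. i \<in> N \<Longrightarrow> b \<in> Obj \<Longrightarrow> p i b = (\<Sum>t\<in>T. lam t * Ps t i b)"
  shows "fractionally_stable N Obj pref prio p"
  unfolding fractionally_stable_def
proof (intro ballI)
  fix i b assume i: "i \<in> N" and b: "b \<in> Obj"
  have "(\<Sum>j\<in>{j\<in>N. prio b i j}. p j b) = (\<Sum>t\<in>T. lam t * (\<Sum>j\<in>{j\<in>N. prio b i j}. Ps t j b))"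
    using p b by (simp add: sum_distrib_left sum.swap[of _ T])
  also have "\<dots> \<le> (\<Sum>t\<in>T. lam t * (\<Sum>b'\<in>{b'\<in>Obj. pref i b' b}. Ps t i b'))"
    using stable nonneg i b by (intro sum_mono mult_left_mono) (auto simp: fractionally_stable_def)
  also have "\<dots> = (\<Sum>b'\<in>{b'\<in>Obj. pref i b' b}. p i b')"
    using p i by (simp add: sum_distrib_left sum.swap[of _ T])
  finally show "(\<Sum>j\<in>{j\<in>N. prio b i j}. p j b) \<le> (\<Sum>b'\<in>{b'\<in>Obj. pref i b' b}. p i b')" .
qed

lemma ex_post_stable_imp_fractionally_stable:
  assumes "market N Obj pref prio" and "ex_post_stable N Obj pref prio p"
  shows "fractionally_stable N Obj pref prio p"
proof -
  obtain k lam and Ps :: "nat \<Rightarrow> 'a \<Rightarrow> 'b \<Rightarrow> real"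
    where stable: "\<forall>t\<in>{1..k}. stable_det N Obj pref prio (Ps t) \<and> 0 < lam t \<and> lam t \<le> 1"
      and p: "\<forall>i\<in>N. \<forall>b\<in>Obj. p i b = (\<Sum>t=1..k. lam t * Ps t i b)"
    using assms(2) unfolding ex_post_stable_def by (elim exE conjE) blast
  show ?thesis
  proof (rule fractionally_stable_convex_combination[where T = "{1..k}" and lam = lam and Ps = Ps])
    fix t assume "t \<in> {1..k}"
    with stable show "fractionally_stable N Obj pref prio (Ps t)" and "0 \<le> lam t"
      using stable_det_imp_fractionally_stable[OF assms(1)] by (auto intro: less_imp_le)
  next
    fix i b assume "i \<in> N" and "b \<in> Obj"
    with p show "p i b = (\<Sum>t\<in>{1..k}. lam t * Ps t i b)" by simp
  qed
qed

text \<open>The counterexample has three agents and three objects, 0, 1, 2. Agents 0 and 1 rank the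
  objects 0 \<succ> 1 \<succ> 2, agent 2 ranks them 2 \<succ> 1 \<succ> 0; objects 0 and 1 rank the agents
  2 \<succ> 0 \<succ> 1, object 2 ranks them 0 \<succ> 1 \<succ> 2. Preferences are encoded by rank functions
  (smaller rank is better).\<close>

definition example_pref_rank :: "nat \<Rightarrow> nat \<Rightarrow> nat" where
  "example_pref_rank i b = (if i = 2 then 2 - b else b)"

definition example_prio_rank :: "nat \<Rightarrow> nat \<Rightarrow> nat" where
  "example_prio_rank b i = (if b = 2 then i else if i = 2 then 0 else i + 1)"

definition example_pref :: "nat \<Rightarrow> nat \<Rightarrow> nat \<Rightarrow> bool" where
  "example_pref i b b' \<longleftrightarrow> example_pref_rank i b < example_pref_rank i b'"

definition example_prio :: "nat \<Rightarrow> nat \<Rightarrow> nat \<Rightarrow> bool" where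
  "example_prio b i j \<longleftrightarrow> example_prio_rank b i < example_prio_rank b j"

definition example_matching :: "nat \<Rightarrow> nat \<Rightarrow> real" where
  "example_matching i b =
     (if i = 0 then (if b = 0 then 2/3 else if b = 1 then 1/3 else 0)
      else if i = 1 then (if b = 0 then 0 else if b = 1 then 1/3 else 2/3)
      else 1/3)"

abbreviation example_agents :: "nat set" where
  "example_agents \<equiv> {0, 1, 2}"

lemma sum_filter_three:
  "(\<Sum>x\<in>{x\<in>{0, 1, 2::nat}. P x}. f x) =
     (if P 0 then f 0 else 0) + (if P 1 then f 1 else 0) + (if P 2 then f 2 else 0)"
  by (subst sum.inter_filter) (simp_all add: add.assoc)

lemma ball_three: "(\<forall>x\<in>{0, 1, 2::nat}. Q x) \<longleftrightarrow> Q 0 \<and> Q 1 \<and> Q 2"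
  by auto

lemma example_market: "market example_agents example_agents example_pref example_prio"
  unfolding market_def strict_order_on_def ball_three
  by (simp add: example_pref_def example_prio_def example_pref_rank_def example_prio_rank_def)

lemma example_random_matching: "random_matching example_agents example_agents example_matching"
  unfolding random_matching_def ball_three by (simp add: example_matching_def)

lemma example_claimwise_stable:
  "claimwise_stable example_agents example_agents example_pref example_prio example_matching"
  unfolding claimwise_stable_def ball_three sum_filter_three
  by (simp add: example_matching_def example_pref_def example_prio_def
      example_pref_rank_def example_prio_rank_def)

text \<open>Agent 2 receives only 1/3 of what it prefers to object 1, while agents 0 and 1, both
  outranked by 2 at object 1, together hold 2/3 of it.\<close>

lemma example_not_fractionally_stable:
  "\<not> fractionally_stable example_agents example_agents example_pref example_prio example_matching"
proof -
  have "(\<Sum>b'\<in>{b'\<in>example_agents. example_pref 2 b' 1}. example_matching 2 b') = 1/3"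
    unfolding sum_filter_three
    by (simp add: example_matching_def example_pref_def example_pref_rank_def)
  moreover have "(\<Sum>j\<in>{j\<in>example_agents. example_prio 1 2 j}. example_matching j 1) = 2/3"
    unfolding sum_filter_three
    by (simp add: example_matching_def example_prio_def example_prio_rank_def)
  ultimately show ?thesis unfolding fractionally_stable_def by force
qed

theorem proposition10:
  shows "\<exists>(N::nat set) (Obj::nat set) (pref::nat \<Rightarrow> nat \<Rightarrow> nat \<Rightarrow> bool) (prio::nat \<Rightarrow> nat \<Rightarrow> nat \<Rightarrow> bool)
           (p::nat \<Rightarrow> nat \<Rightarrow> real).
           market N Obj pref prio \<and> random_matching N Obj p \<and>
           claimwise_stable N Obj pref prio p \<and>
           \<not> ex_post_stable N Obj pref prio p \<and>
           \<not> fractionally_stable N Obj pref prio p"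
  using example_market example_random_matching example_claimwise_stable
    example_not_fractionally_stable ex_post_stable_imp_fractionally_stable[OF example_market]
  by blast

end
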